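(* Let $(M^n,c,v^m d\nu)$ be a smooth conformal measure space with characteristic constant $\mu$, $n\ge3$, $m\in\mathbb{R}\setminus\{-n,1-n,2-n\}$. Let $I\in\mathcal{T}$ and fix a scale $g\in c$; let $I$ have top component $\sigma$, middle $\omega$, bottom $\rho$, and let $T$ be the middle component of $\nabla^WI$ (the 2-tensor $T(x,z)=g(\nabla_x\omega+\sigma P^W(x)+\rho x,z)$). Then $$\operatorname{tr}T+mv^{-1}\langle I,\tilde J\rangle=(m+n)\rho+\delta_\phi\omega+\sigma\mathrm{J}^W,$$ where $\delta_\phi\omega=\operatorname{div}_g\omega+mv^{-1}g(\omega,\nabla v)$.
   Context: Conformal setting: $(M^n,c)$ a manifold with a conformal class of Riemannian metrics. $\mathcal{E}[w]$: conformal densities of weight $w$ (functions in a scale). Standard tractor bundle $\mathbb{T}\cong\mathbb{R}\oplus TM\oplus\mathbb{R}$ in a scale, tractor $I$ with top $\sigma$, middle $\omega$, bottom $\rho$; tractor metric $\langle I,K\rangle$ with $\langle I,I\rangle=2\sigma\rho+|\omega|^2$. $X$: top and middle $0$, bottom $1$. Schouten $P$, $\mathrm{J}=\operatorname{tr}P$. $\mathbb{D}v$ ($v\in\mathcal{E}[1]$): top $nv$, middle $n\nabla v$, bottom $-(\Delta v+\mathrm{J}v)$. SCMS: positive $v\in\mathcal{E}[1]$, $m\in\mathbb{R}$, fixed constant $\mu$. In a scale, $\mathrm{Ric}^m_\phi=\mathrm{Ric}-mv^{-1}\nabla^2v$, $R^m_\phi=R-2mv^{-1}\Delta v-m(m-1)v^{-2}|\nabla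 v|^2$, $\mathrm{J}^W=\frac{1}{2(m+n-1)}(R^m_\phi+m\mu v^{-2})$, $P^W=\frac{1}{m+n-2}(\mathrm{Ric}^m_\phi-\mathrm{J}^Wg)$ ($P^W(x)$ the vector dual to $P^W(x,\cdot)$). $J=\frac1n\mathbb{D}v$, $\tilde J=J+\frac{(m+2n-2)(\mu-(m-1)|J|^2)}{2(m+n-1)(m+n-2)\langle X,J\rangle}X$. The $W$-tractor connection $\nabla^W_xI$ has top $x\sigma-g(\omega,x)$, middle $\nabla_x\omega+\sigma P^W(x)+\rho x$, bottom $x\rho-P^W(x,\omega)$. *)

theory Defs
  imports "HOL-Analysis.Analysis"
begin

text \<open>Local coordinate model: the manifold is represented by a coordinate chart,
an open set U in real^'n, with n = CARD('n). A scale g is given by its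
component functions g p i j.\<close>

definition partial :: "'n::finite \<Rightarrow> (real^'n \<Rightarrow> real) \<Rightarrow> real^'n \<Rightarrow> real" where
  "partial i f p = deriv (\<lambda>t. f (p + t *\<^sub>R axis i 1)) 0"

definition smooth_on :: "(real^'n::finite) set \<Rightarrow> (real^'n \<Rightarrow> real) \<Rightarrow> bool" where
  "smooth_on U f \<longleftrightarrow> (\<forall>is. continuous_on U (foldr partial is f) \<and>
     (\<forall>p\<in>U. \<forall>i. (\<lambda>t. foldr partial is f (p + t *\<^sub>R axis i 1)) differentiable (at 0)))"

type_synonym 'n metric = "real^'n \<Rightarrow> 'n \<Rightarrow> 'n \<Rightarrow> real"

definition riem_metric :: "(real^'n::finite) set \<Rightarrow> 'n metric \<Rightarrow> bool" where
  "riem_metric U g \<longleftrightarrow> (\<forall>i j. smooth_on U (\<lambda>q. g q i j)) \<and>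
     (\<forall>p\<in>U. \<forall>i j. g p i j = g p j i) \<and>
     (\<forall>p\<in>U. \<forall>x::real^'n. x \<noteq> 0 \<longrightarrow> (\<Sum>i\<in>UNIV. \<Sum>j\<in>UNIV. g p i j * x$i * x$j) > 0)"

definition ginv :: "'n::finite metric \<Rightarrow> real^'n \<Rightarrow> 'n \<Rightarrow> 'n \<Rightarrow> real" where
  "ginv g p i j = matrix_inv (\<chi> a b. g p a b) $ i $ j"

definition gmetric :: "'n::finite metric \<Rightarrow> real^'n \<Rightarrow> real^'n \<Rightarrow> real^'n \<Rightarrow> real" where
  "gmetric g p x y = (\<Sum>i\<in>UNIV. \<Sum>j\<in>UNIV. g p i j * x$i * y$j)"

definition trace_g :: "'n::finite metric \<Rightarrow> real^'n \<Rightarrow> (real^'n \<Rightarrow> real^'n \<Rightarrow> real) \<Rightarrow> real" where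
  "trace_g g p B = (\<Sum>i\<in>UNIV. \<Sum>j\<in>UNIV. ginv g p i j * B (axis i 1) (axis j 1))"

definition christoffel :: "'n::finite metric \<Rightarrow> real^'n \<Rightarrow> 'n \<Rightarrow> 'n \<Rightarrow> 'n \<Rightarrow> real" where
  "christoffel g p k i j = (1/2) * (\<Sum>l\<in>UNIV. ginv g p k l *
      (partial i (\<lambda>q. g q j l) p + partial j (\<lambda>q. g q i l) p - partial l (\<lambda>q. g q i j) p))"

definition ricci :: "'n::finite metric \<Rightarrow> real^'n \<Rightarrow> 'n \<Rightarrow> 'n \<Rightarrow> real" where
  "ricci g p i j = (\<Sum>k\<in>UNIV. partial k (\<lambda>q. christoffel g q k i j) p)
     - (\<Sum>k\<in>UNIV. partial j (\<lambda>q. christoffel g q k i k) p)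
     + (\<Sum>k\<in>UNIV. \<Sum>l\<in>UNIV. christoffel g p k k l * christoffel g p l i j
                 - christoffel g p k j l * christoffel g p l i k)"

definition scal :: "'n::finite metric \<Rightarrow> real^'n \<Rightarrow> real" where
  "scal g p = (\<Sum>i\<in>UNIV. \<Sum>j\<in>UNIV. ginv g p i j * ricci g p i j)"

definition schoutenJ :: "'n::finite metric \<Rightarrow> real^'n \<Rightarrow> real" where
  "schoutenJ g p = scal g p / (2 * (real CARD('n) - 1))"

definition hess :: "'n::finite metric \<Rightarrow> (real^'n \<Rightarrow> real) \<Rightarrow> real^'n \<Rightarrow> 'n \<Rightarrow> 'n \<Rightarrow> real" where
  "hess g f p i j = partial i (partial j f) p - (\<Sum>k\<in>UNIV. christoffel g p k i j * partial k f p)"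

definition lap :: "'n::finite metric \<Rightarrow> (real^'n \<Rightarrow> real) \<Rightarrow> real^'n \<Rightarrow> real" where
  "lap g f p = (\<Sum>i\<in>UNIV. \<Sum>j\<in>UNIV. ginv g p i j * hess g f p i j)"

definition grad :: "'n::finite metric \<Rightarrow> (real^'n \<Rightarrow> real) \<Rightarrow> real^'n \<Rightarrow> real^'n" where
  "grad g f p = (\<chi> i. \<Sum>j\<in>UNIV. ginv g p i j * partial j f p)"

definition cov_vf :: "'n::finite metric \<Rightarrow> (real^'n \<Rightarrow> real^'n) \<Rightarrow> real^'n \<Rightarrow> 'n \<Rightarrow> real^'n" where
  "cov_vf g w p i = (\<chi> k. partial i (\<lambda>q. w q $ k) p + (\<Sum>j\<in>UNIV. christoffel g p k i j * w p $ j))"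

definition cov_dir :: "'n::finite metric \<Rightarrow> (real^'n \<Rightarrow> real^'n) \<Rightarrow> real^'n \<Rightarrow> real^'n \<Rightarrow> real^'n" where
  "cov_dir g w p x = (\<Sum>i\<in>UNIV. x$i *\<^sub>R cov_vf g w p i)"

definition dir_deriv :: "(real^'n::finite \<Rightarrow> real) \<Rightarrow> real^'n \<Rightarrow> real^'n \<Rightarrow> real" where
  "dir_deriv f p x = (\<Sum>i\<in>UNIV. x$i * partial i f p)"

definition divg :: "'n::finite metric \<Rightarrow> (real^'n \<Rightarrow> real^'n) \<Rightarrow> real^'n \<Rightarrow> real" where
  "divg g w p = (\<Sum>i\<in>UNIV. cov_vf g w p i $ i)"

definition ric_m :: "'n::finite metric \<Rightarrow> real \<Rightarrow> (real^'n \<Rightarrow> real) \<Rightarrow> real^'n \<Rightarrow> 'n \<Rightarrow> 'n \<Rightarrow> real" where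
  "ric_m g m v p i j = ricci g p i j - m / v p * hess g v p i j"

definition scal_m :: "'n::finite metric \<Rightarrow> real \<Rightarrow> (real^'n \<Rightarrow> real) \<Rightarrow> real^'n \<Rightarrow> real" where
  "scal_m g m v p = scal g p - 2 * m / v p * lap g v p
     - m * (m - 1) / (v p)^2 * gmetric g p (grad g v p) (grad g v p)"

definition J_W :: "'n::finite metric \<Rightarrow> real \<Rightarrow> real \<Rightarrow> (real^'n \<Rightarrow> real) \<Rightarrow> real^'n \<Rightarrow> real" where
  "J_W g m \<mu> v p = (scal_m g m v p + m * \<mu> / (v p)^2) / (2 * (m + real CARD('n) - 1))"

definition P_W :: "'n::finite metric \<Rightarrow> real \<Rightarrow> real \<Rightarrow> (real^'n \<Rightarrow> real) \<Rightarrow> real^'n \<Rightarrow> real^'n \<Rightarrow> real^'n \<Rightarrow> real" where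
  "P_W g m \<mu> v p x z = (\<Sum>i\<in>UNIV. \<Sum>j\<in>UNIV. x$i * z$j *
      ((ric_m g m v p i j - J_W g m \<mu> v p * g p i j) / (m + real CARD('n) - 2)))"

definition P_W_vec :: "'n::finite metric \<Rightarrow> real \<Rightarrow> real \<Rightarrow> (real^'n \<Rightarrow> real) \<Rightarrow> real^'n \<Rightarrow> real^'n \<Rightarrow> real^'n" where
  "P_W_vec g m \<mu> v p x = (\<chi> k. \<Sum>l\<in>UNIV. ginv g p k l * P_W g m \<mu> v p x (axis l 1))"

subsection \<open>Tractors in a scale: (top, middle, bottom)\<close>

type_synonym 'n tractor = "real \<times> (real^'n) \<times> real"

definition tractor_metric :: "'n::finite metric \<Rightarrow> real^'n \<Rightarrow> 'n tractor \<Rightarrow> 'n tractor \<Rightarrow> real" where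
  "tractor_metric g p I K = (case I of (\<sigma>, \<omega>, \<rho>) \<Rightarrow> case K of (\<sigma>', \<omega>', \<rho>') \<Rightarrow>
      \<sigma> * \<rho>' + \<rho> * \<sigma>' + gmetric g p \<omega> \<omega>')"

definition tractorX :: "'n::finite tractor" where
  "tractorX = (0, 0, 1)"

definition tractorD :: "'n::finite metric \<Rightarrow> (real^'n \<Rightarrow> real) \<Rightarrow> real^'n \<Rightarrow> 'n tractor" where
  "tractorD g v p = (real CARD('n) * v p, real CARD('n) *\<^sub>R grad g v p,
      - (lap g v p + schoutenJ g p * v p))"

definition tractorJ :: "'n::finite metric \<Rightarrow> (real^'n \<Rightarrow> real) \<Rightarrow> real^'n \<Rightarrow> 'n tractor" where
  "tractorJ g v p = (1 / real CARD('n)) *\<^sub>R tractorD g v p"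

definition tractorJtilde :: "'n::finite metric \<Rightarrow> real \<Rightarrow> real \<Rightarrow> (real^'n \<Rightarrow> real) \<Rightarrow> real^'n \<Rightarrow> 'n tractor" where
  "tractorJtilde g m \<mu> v p = (let n = real CARD('n); J = tractorJ g v p in
     J + ((m + 2*n - 2) * (\<mu> - (m - 1) * tractor_metric g p J J)
          / (2 * (m + n - 1) * (m + n - 2) * tractor_metric g p tractorX J)) *\<^sub>R tractorX)"

definition W_conn :: "'n::finite metric \<Rightarrow> real \<Rightarrow> real \<Rightarrow> (real^'n \<Rightarrow> real) \<Rightarrow>
    (real^'n \<Rightarrow> real) \<Rightarrow> (real^'n \<Rightarrow> real^'n) \<Rightarrow> (real^'n \<Rightarrow> real) \<Rightarrow> real^'n \<Rightarrow> real^'n \<Rightarrow> 'n tractor" where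
  "W_conn g m \<mu> v \<sigma> \<omega> \<rho> p x =
     (dir_deriv \<sigma> p x - gmetric g p (\<omega> p) x,
      cov_dir g \<omega> p x + \<sigma> p *\<^sub>R P_W_vec g m \<mu> v p x + \<rho> p *\<^sub>R x,
      dir_deriv \<rho> p x - P_W g m \<mu> v p x (\<omega> p))"

definition delta_phi :: "'n::finite metric \<Rightarrow> real \<Rightarrow> (real^'n \<Rightarrow> real) \<Rightarrow> (real^'n \<Rightarrow> real^'n) \<Rightarrow> real^'n \<Rightarrow> real" where
  "delta_phi g m v w p = divg g w p + m / v p * gmetric g p (w p) (grad g v p)"

end

theory Submission
  imports Defs
begin

text \<open>Tracing the middle slot of \<open>\<nabla>\<^sup>W I\<close> gives \<open>div \<omega> + \<sigma> tr P\<^sup>W + n \<rho>\<close>, and pairing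
  \<open>I\<close> with \<open>J\<tilde>\<close> gives \<open>\<sigma> \<cdot> (bottom slot of J\<tilde>) + \<rho> v + g(\<omega>, \<nabla>v)\<close>. The correction term of
  \<open>J\<tilde>\<close> is chosen precisely so that \<open>tr P\<^sup>W + m v\<^sup>-\<^sup>1 (bottom slot of J\<tilde>) = J\<^sup>W\<close>; using
  \<open>tr Ric\<^sup>m\<^sub>\<phi> = R - m v\<^sup>-\<^sup>1 \<Delta>v\<close> this is an identity of rational functions in \<open>R\<close>, \<open>\<Delta>v\<close>,
  \<open>|\<nabla>v|\<^sup>2\<close>, \<open>v\<close>, \<open>\<mu>\<close>, \<open>m\<close> and \<open>n\<close>.\<close>

lemma sum_mult_axis: "(\<Sum>b\<in>UNIV. f b * axis j (1::'a::comm_semiring_1) $ b) = f j"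
  by (simp add: axis_def if_distrib[of "times _"] cong: if_cong)

lemma sum_axis_mult: "(\<Sum>b\<in>UNIV. axis j (1::'a::comm_semiring_1) $ b * f b) = f j"
  by (simp add: axis_def if_distrib[of "\<lambda>x. x * _"] cong: if_cong)

lemma sum_sum_axis:
  "(\<Sum>a\<in>UNIV. \<Sum>b\<in>UNIV. axis i (1::'a::comm_semiring_1) $ a * axis j 1 $ b * F a b) = F i j"
  by (simp add: mult.assoc sum_distrib_left[symmetric] sum_axis_mult)

lemma sum_axis_diag: "(\<Sum>i\<in>(UNIV::'n::finite set). axis i (1::real) $ i) = real CARD('n)"
  by (simp add: axis_def)

lemma P_W_axis:
  fixes g :: "'n::finite metric"
  shows "P_W g m \<mu> v p (axis i 1) (axis j 1)
     = (ric_m g m v p i j - J_W g m \<mu> v p * g p i j) / (m + real CARD('n) - 2)"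
  unfolding P_W_def by (rule sum_sum_axis)

lemma gmetric_axis_right: "gmetric g p x (axis j 1) = (\<Sum>a\<in>UNIV. g p a j * x $ a)"
  unfolding gmetric_def by (simp add: sum_mult_axis)

lemma cov_dir_axis: "cov_dir g w p (axis i 1) = cov_vf g w p i"
  by (simp add: cov_dir_def axis_def if_distrib[of "\<lambda>x. x *\<^sub>R _"] cong: if_cong)

lemma riem_metric_invertible:
  assumes "riem_metric U g" "p \<in> U"
  shows "invertible (\<chi> a b. g p a b)"
proof -
  define A where "A = (\<chi> a b. g p a b)"
  have "x = 0" if "A *v x = 0" for x
  proof -
    have "(\<Sum>i\<in>UNIV. \<Sum>j\<in>UNIV. g p i j * x$i * x$j) = (\<Sum>i\<in>UNIV. x$i * (A *v x)$i)"
      by (simp add: A_def matrix_vector_mult_def sum_distrib_left algebra_simps)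
    with that show "x = 0" using assms unfolding riem_metric_def by force
  qed
  then show ?thesis
    unfolding A_def[symmetric] using invertible_left_inverse matrix_left_invertible_ker by blast
qed

lemma ginv_mult_metric:
  assumes "riem_metric U g" "p \<in> U"
  shows "(\<Sum>j\<in>UNIV. ginv g p i j * g p j k) = (if i = k then 1 else 0)"
proof -
  define A where "A = (\<chi> a b. g p a b)"
  have "\<exists>A'. A ** A' = mat 1 \<and> A' ** A = mat 1"
    using riem_metric_invertible[OF assms] unfolding A_def invertible_def .
  then have "A ** matrix_inv A = mat 1 \<and> matrix_inv A ** A = mat 1"
    unfolding matrix_inv_def by (rule someI_ex)
  then have "(matrix_inv A ** A) $ i $ k = mat 1 $ i $ k" by simp
  then show ?thesis
    by (simp add: matrix_matrix_mult_def mat_def ginv_def A_def)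
qed

lemma trace_g_gmetric:
  assumes "riem_metric U g" "p \<in> U"
  shows "trace_g g p (\<lambda>x z. gmetric g p (F x) z) = (\<Sum>i\<in>UNIV. F (axis i 1) $ i)"
proof -
  have sym: "g p a j = g p j a" for a j
    using assms unfolding riem_metric_def by blast
  have "trace_g g p (\<lambda>x z. gmetric g p (F x) z)
      = (\<Sum>i\<in>UNIV. \<Sum>j\<in>UNIV. \<Sum>a\<in>UNIV. F (axis i 1) $ a * (ginv g p i j * g p j a))"
    unfolding trace_g_def gmetric_axis_right by (simp add: sum_distrib_left sym mult_ac)
  also have "\<dots> = (\<Sum>i\<in>UNIV. \<Sum>a\<in>UNIV. F (axis i 1) $ a * (\<Sum>j\<in>UNIV. ginv g p i j * g p j a))"
    by (rule sum.cong[OF refl], subst sum.swap) (simp add: sum_distrib_left)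
  also have "\<dots> = (\<Sum>i\<in>UNIV. F (axis i 1) $ i)"
    by (simp add: ginv_mult_metric[OF assms] if_distrib[of "times _"] cong: if_cong)
  finally show ?thesis .
qed

lemma trace_g_metric:
  fixes g :: "'n::finite metric"
  assumes "riem_metric U g" "p \<in> U"
  shows "trace_g g p (gmetric g p) = real CARD('n)"
  using trace_g_gmetric[OF assms, of id] by (simp add: sum_axis_diag)

lemma trace_g_P_W:
  fixes g :: "'n::finite metric"
  assumes "riem_metric U g" "p \<in> U"
  shows "trace_g g p (P_W g m \<mu> v p)
    = (scal g p - m / v p * lap g v p - real CARD('n) * J_W g m \<mu> v p) / (m + real CARD('n) - 2)"
proof -
  have ric: "(\<Sum>i\<in>UNIV. \<Sum>j\<in>UNIV. ginv g p i j * ric_m g m v p i j) = scal g p - m / v p * lap g v p"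
    unfolding ric_m_def scal_def lap_def
    by (simp add: right_diff_distrib sum_subtractf sum_distrib_left mult_ac)
  have met: "(\<Sum>i\<in>UNIV. \<Sum>j\<in>UNIV. ginv g p i j * g p i j) = real CARD('n)"
    using trace_g_metric[OF assms] by (simp add: trace_g_def gmetric_axis_right sum_mult_axis)
  have "trace_g g p (P_W g m \<mu> v p)
      = ((\<Sum>i\<in>UNIV. \<Sum>j\<in>UNIV. ginv g p i j * ric_m g m v p i j)
         - J_W g m \<mu> v p * (\<Sum>i\<in>UNIV. \<Sum>j\<in>UNIV. ginv g p i j * g p i j)) / (m + real CARD('n) - 2)"
    unfolding trace_g_def P_W_axis
    by (simp add: sum_divide_distrib sum_subtractf sum_distrib_left diff_divide_distrib algebra_simps)
  then show ?thesis unfolding ric met by (simp add: mult.commute)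
qed

lemma trace_g_W_conn_middle:
  fixes g :: "'n::finite metric"
  assumes "riem_metric U g" "p \<in> U"
  shows "trace_g g p (\<lambda>x z. gmetric g p (fst (snd (W_conn g m \<mu> v \<sigma> \<omega> \<rho> p x))) z)
     = divg g \<omega> p + \<sigma> p * trace_g g p (P_W g m \<mu> v p) + real CARD('n) * \<rho> p"
  unfolding trace_g_gmetric[OF assms] W_conn_def
  by (simp add: cov_dir_axis P_W_vec_def trace_g_def divg_def sum.distrib sum_distrib_left
      sum_axis_diag sum_distrib_right[symmetric])

lemma tractor_metric_X_left: "tractor_metric g p tractorX I = fst I"
  by (cases I) (simp add: tractor_metric_def tractorX_def gmetric_def)

lemma tractor_metric_self:
  "tractor_metric g p (\<sigma>, \<omega>, \<rho>) (\<sigma>, \<omega>, \<rho>) = 2 * \<sigma> * \<rho> + gmetric g p \<omega> \<omega>"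
  by (simp add: tractor_metric_def)

lemma tractorJ_eq:
  fixes g :: "'n::finite metric"
  shows "tractorJ g v p = (v p, grad g v p, - (lap g v p + schoutenJ g p * v p) / real CARD('n))"
  by (simp add: tractorJ_def tractorD_def)

lemma tractor_metric_Jtilde:
  "tractor_metric g p (\<sigma>, \<omega>, \<rho>) (tractorJtilde g m \<mu> v p)
     = \<sigma> * snd (snd (tractorJtilde g m \<mu> v p)) + \<rho> * v p + gmetric g p \<omega> (grad g v p)"
  by (simp add: tractorJtilde_def Let_def tractorJ_eq tractorX_def tractor_metric_def)

lemma trace_P_W_add_Jtilde_bottom:
  fixes g :: "'n::finite metric"
  assumes "riem_metric U g" "p \<in> U" and "v p \<noteq> 0" and "CARD('n) \<noteq> 1"
    and "m + real CARD('n) - 1 \<noteq> 0" "m + real CARD('n) - 2 \<noteq> 0"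
  shows "trace_g g p (P_W g m \<mu> v p) + m / v p * snd (snd (tractorJtilde g m \<mu> v p))
    = J_W g m \<mu> v p"
proof -
  define n where "n = real CARD('n)"
  define R where "R = scal g p"
  define L where "L = lap g v p"
  define G where "G = gmetric g p (grad g v p) (grad g v p)"
  define b where "b = - (L + R / (2 * (n - 1)) * v p) / n"
  have Jtilde: "snd (snd (tractorJtilde g m \<mu> v p))
      = b + (m + 2*n - 2) * (\<mu> - (m - 1) * (2 * v p * b + G)) / (2 * (m + n - 1) * (m + n - 2) * v p)"
    by (simp add: tractorJtilde_def Let_def tractorJ_eq tractor_metric_X_left tractor_metric_self
        schoutenJ_def n_def R_def L_def G_def b_def) (simp add: tractorX_def)
  have JW: "J_W g m \<mu> v p = (R - 2*m / v p * L - m*(m - 1) / (v p)^2 * G + m*\<mu> / (v p)^2) / (2 * (m + n - 1))"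
    by (simp add: J_W_def scal_m_def n_def R_def L_def G_def)
  have nonzero: "2 * (m + n - 1) \<noteq> 0" "2 * (n - 1) \<noteq> 0" "n \<noteq> 0" "m + n - 2 \<noteq> 0"
    "2 * (m + n - 1) * (m + n - 2) * v p \<noteq> 0" "(v p)^2 \<noteq> 0"
    using assms(3-6) by (auto simp: n_def)
  show ?thesis
    unfolding trace_g_P_W[OF assms(1,2)] Jtilde JW b_def n_def[symmetric] R_def[symmetric] L_def[symmetric]
    using nonzero by (simp add: divide_simps) (simp add: power2_eq_square algebra_simps)
qed

theorem lemma5p13:
  fixes U :: "(real^'n::finite) set" and g :: "'n metric"
    and v \<sigma> \<rho> :: "real^'n \<Rightarrow> real" and \<omega> :: "real^'n \<Rightarrow> real^'n"
    and m \<mu> :: real and p :: "real^'n"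
  assumes "CARD('n) \<ge> 3"
    and "open U" and "riem_metric U g"
    and "smooth_on U v" and "\<forall>q\<in>U. v q > 0"
    and "smooth_on U \<sigma>" and "smooth_on U \<rho>" and "\<forall>k. smooth_on U (\<lambda>q. \<omega> q $ k)"
    and "m \<notin> {- real CARD('n), 1 - real CARD('n), 2 - real CARD('n)}"
    and "p \<in> U"
  shows "trace_g g p (\<lambda>x z. gmetric g p (fst (snd (W_conn g m \<mu> v \<sigma> \<omega> \<rho> p x))) z)
         + m / v p * tractor_metric g p (\<sigma> p, \<omega> p, \<rho> p) (tractorJtilde g m \<mu> v p)
       = (m + real CARD('n)) * \<rho> p + delta_phi g m v \<omega> p + \<sigma> p * J_W g m \<mu> v p"
proof -
  have v: "v p \<noteq> 0" using assms(5,10) by force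
  have key: "trace_g g p (P_W g m \<mu> v p) + m / v p * snd (snd (tractorJtilde g m \<mu> v p))
      = J_W g m \<mu> v p"
    using assms(1,9) by (intro trace_P_W_add_Jtilde_bottom[where v = v, OF assms(3,10) v]) auto
  show ?thesis
    unfolding trace_g_W_conn_middle[OF assms(3,10)] tractor_metric_Jtilde delta_phi_def key[symmetric]
    using v by (simp add: field_simps)
qed

end
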